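(* Let $\varLambda=\{a_n:n\in\mathbb{N}\}\subseteq\mathbb{R}$ for a real sequence $(a_n)_n$ with $\lim_{n\to\infty}(a_{n+1}-a_n)=\infty$. Then $\varLambda$ has finite local complexity, and for every van Hove sequence $(A_n)_n$ in $\mathbb{R}$ with $\lim_{n\to\infty}\mathrm{card}(A_n\cap\varLambda)=\infty$, the counting autocorrelation and diffraction of $\varLambda$ with respect to $(A_n)_n$ are $\gamma_{\mathrm{count}}=\delta_0$ and $\widehat{\gamma_{\mathrm{count}}}=\lambda$ (Lebesgue measure). In particular, this holds for all van Hove sequences which are nested ($A_n\subseteq A_{n+1}$) and exhausting ($\bigcup_nA_n=\mathbb{R}$).
   Context: Finite local complexity: $\varLambda-\varLambda$ is locally finite. A van Hove sequence in $\mathbb{R}$ is a sequence of compact sets $A_n$ of positive Lebesgue measure with $\mathrm{vol}(\partial^K A_n)/\mathrm{vol}(A_n)\to0$ for all compact $K$, where $\partial^K A=((A+K)\setminus A^\circ)\cup((\overline{\mathbb{R}\setminus A}-K)\cap A)$. For finite $F$, $\gamma_F=\frac{1}{\mathrm{card}(F)}\sum_{x,y\in F}\delta_{x-y}$ if $F\ne\emptyset$, $\gamma_\emptyset=0$; the counting autocorrelation is the vague limit of $\gamma_{\varLambda\cap A_n}$ and its Fourier transform is the counting diffraction. *)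

theory Defs
  imports "HOL-Probability.Probability"
begin

definition diff_set :: "real set \<Rightarrow> real set" where
  "diff_set L = {x - y | x y. x \<in> L \<and> y \<in> L}"

definition locally_finite_set :: "real set \<Rightarrow> bool" where
  "locally_finite_set S \<longleftrightarrow> (\<forall>B. bounded B \<longrightarrow> finite (B \<inter> S))"

definition FLC :: "real set \<Rightarrow> bool" where
  "FLC L \<longleftrightarrow> locally_finite_set (diff_set L)"

definition mink_plus :: "real set \<Rightarrow> real set \<Rightarrow> real set" where
  "mink_plus A K = {a + k | a k. a \<in> A \<and> k \<in> K}"

definition mink_minus :: "real set \<Rightarrow> real set \<Rightarrow> real set" where
  "mink_minus A K = {a - k | a k. a \<in> A \<and> k \<in> K}"

definition vH_boundary :: "real set \<Rightarrow> real set \<Rightarrow> real set" where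
  "vH_boundary K A =
     ((mink_plus A K - interior A) \<union> (mink_minus (closure (UNIV - A)) K \<inter> A))"

definition van_Hove :: "(nat \<Rightarrow> real set) \<Rightarrow> bool" where
  "van_Hove A \<longleftrightarrow>
     (\<forall>n. compact (A n) \<and> measure lborel (A n) > 0) \<and>
     (\<forall>K. compact K \<longrightarrow>
        (\<lambda>n. measure lborel (vH_boundary K (A n)) / measure lborel (A n)) \<longlonglongrightarrow> 0)"

definition Cc :: "(real \<Rightarrow> complex) set" where
  "Cc = {\<phi>. continuous_on UNIV \<phi> \<and> compact (closure {x. \<phi> x \<noteq> 0})}"

definition vague_conv :: "(nat \<Rightarrow> real measure) \<Rightarrow> real measure \<Rightarrow> bool" where
  "vague_conv \<mu>s \<mu> \<longleftrightarrow>
     (\<forall>\<phi>\<in>Cc. (\<lambda>n. integral\<^sup>L (\<mu>s n) \<phi>) \<longlonglongrightarrow> integral\<^sup>L \<mu> \<phi>)"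

text \<open>The finite autocorrelation measure
  \<open>\<gamma>_F = (1/card F) \<Sum>_{x,y\<in>F} \<delta>_{x-y}\<close> (and \<open>\<gamma>_\<emptyset> = 0\<close>), as a point-mass measure.\<close>
definition gamma_fin :: "real set \<Rightarrow> real measure" where
  "gamma_fin F =
     (if F = {} then null_measure (count_space UNIV)
      else density (count_space UNIV)
        (\<lambda>z. ennreal (real (card {(x, y). x \<in> F \<and> y \<in> F \<and> x - y = z}) / real (card F))))"

text \<open>Counting autocorrelation of \<open>L\<close> w.r.t. \<open>A\<close>: the vague limit of \<open>\<gamma>_{L \<inter> A n}\<close>
  (vague limits are unique, so "the autocorrelation is \<open>\<gamma>\<close>" means this).\<close>
definition is_counting_autocorrelation ::
  "real set \<Rightarrow> (nat \<Rightarrow> real set) \<Rightarrow> real measure \<Rightarrow> bool" where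
  "is_counting_autocorrelation L A \<gamma> \<longleftrightarrow> vague_conv (\<lambda>n. gamma_fin (L \<inter> A n)) \<gamma>"

text \<open>Fourier transform of a positive definite measure (Bochner--Schwartz):
  \<open>\<mu> = \<gamma>\<^sup>^\<close> iff for all test functions \<open>\<phi>\<close>,
  \<open>\<gamma>(\<phi> * \<phi>~) = \<integral> |\<phi>\<^sup>\<or>|\<^sup>2 d\<mu>\<close> (the positive measure with this property is unique).\<close>
definition inv_fourier :: "(real \<Rightarrow> complex) \<Rightarrow> real \<Rightarrow> complex" where
  "inv_fourier \<phi> k = (\<integral>x. \<phi> x * cis (2 * pi * k * x) \<partial>lborel)"

definition conv_tilde :: "(real \<Rightarrow> complex) \<Rightarrow> real \<Rightarrow> complex" where
  "conv_tilde \<phi> x = (\<integral>y. \<phi> y * cnj (\<phi> (y - x)) \<partial>lborel)"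

definition is_fourier_transform :: "real measure \<Rightarrow> real measure \<Rightarrow> bool" where
  "is_fourier_transform \<gamma> \<mu> \<longleftrightarrow>
     (\<forall>\<phi>\<in>Cc. integrable \<mu> (\<lambda>k. (cmod (inv_fourier \<phi> k))\<^sup>2) \<and>
        integral\<^sup>L \<gamma> (conv_tilde \<phi>) = complex_of_real (\<integral>k. (cmod (inv_fourier \<phi> k))\<^sup>2 \<partial>\<mu>))"

end

theory Submission
  imports Defs
begin

text \<open>
  Since the gaps \<open>a (n + 1) - a n\<close> tend to infinity, for every \<open>R\<close> only finitely many pairs
  of distinct points of \<open>\<Lambda>\<close> lie within distance \<open>R\<close> of each other; this gives finite local
  complexity. For a test function \<open>\<phi>\<close> supported in \<open>[-R, R]\<close> the diagonal pairs contribute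
  exactly \<open>\<phi> 0\<close> to \<open>\<gamma>_F(\<phi>)\<close>, and the off-diagonal ones at most
  \<open>card (close pairs) * \<parallel>\<phi>\<parallel>\<^sub>\<infinity> / card F\<close>, which tends to \<open>0\<close> as \<open>card F \<rightarrow> \<infinity>\<close>.
  So the autocorrelation is \<open>\<delta>\<^sub>0\<close>, and its Fourier transform is Lebesgue measure by
  Plancherel's identity \<open>\<integral>|\<phi>\<^sup>\<or>|\<^sup>2 = \<integral>|\<phi>|\<^sup>2 = (\<phi> * \<phi>~)(0)\<close>. We prove the latter for continuous
  compactly supported \<open>\<phi>\<close> by damping \<open>|\<phi>\<^sup>\<or>|\<^sup>2\<close> with the Gaussian weight
  \<open>exp (-(2\<pi>sk)\<^sup>2/2)\<close>: Fubini turns the damped integral into \<open>\<integral>\<phi>\<close> against a Gaussian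
  smoothing of \<open>cnj \<phi>\<close>, and \<open>s \<rightarrow> 0\<close> is handled by dominated convergence on the space side
  and monotone convergence on the frequency side.
\<close>

section \<open>Plancherel's identity for continuous functions of compact support\<close>

lemma borel_measurable_cis [measurable]: "cis \<in> borel_measurable borel"
  by (intro borel_measurable_continuous_onI continuous_intros)

lemma borel_measurable_cnj [measurable (raw)]:
  "f \<in> borel_measurable M \<Longrightarrow> (\<lambda>x. cnj (f x)) \<in> borel_measurable M"
  by (rule borel_measurable_continuous_on[where f=cnj]) (auto intro: continuous_intros)

lemma lborel_integral_swap_product_bound:
  fixes G :: "real \<Rightarrow> real \<Rightarrow> 'a::{banach, second_countable_topology}"
  assumes G: "(\<lambda>(x, y). G x y) \<in> borel_measurable (lborel \<Otimes>\<^sub>M lborel)"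
    and g: "integrable lborel g" and h: "integrable lborel h"
    and bound: "\<And>x y. norm (G x y) \<le> g x * h y"
  shows "(\<integral>x. (\<integral>y. G x y \<partial>lborel) \<partial>lborel) = (\<integral>y. (\<integral>x. G x y \<partial>lborel) \<partial>lborel)"
proof -
  have [measurable]: "g \<in> borel_measurable lborel" "h \<in> borel_measurable lborel"
    using g h by auto
  have "integrable (lborel \<Otimes>\<^sub>M lborel) (\<lambda>(x, y). g x * h y)"
  proof (rule lborel_pair.Fubini_integrable)
    have "integrable lborel (\<lambda>x. norm (g x) * (\<integral>y. norm (h y) \<partial>lborel))"
      using g by (intro integrable_mult_left integrable_norm)
    then show "integrable lborel (\<lambda>x. \<integral>y. norm (case (x, y) of (x, y) \<Rightarrow> g x * h y) \<partial>lborel)"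
      by (simp add: abs_mult)
  qed (use h in auto)
  then have "integrable (lborel \<Otimes>\<^sub>M lborel) (\<lambda>(x, y). G x y)"
    by (rule Bochner_Integration.integrable_bound)
      (use G bound in \<open>auto split: prod.split intro: order_trans[OF _ abs_ge_self]\<close>)
  from lborel_pair.Fubini_integral[OF this] show ?thesis by simp
qed

lemma bounded_continuous_compact_support:
  fixes \<phi> :: "real \<Rightarrow> 'a::real_normed_vector"
  assumes cont: "continuous_on UNIV \<phi>" and supp: "\<And>x. R < \<bar>x\<bar> \<Longrightarrow> \<phi> x = 0"
  obtains M where "\<And>x. norm (\<phi> x) \<le> M"
proof -
  have "\<phi> x \<in> insert 0 (\<phi> ` cball 0 \<bar>R\<bar>)" for x
    using supp[of x] by (cases "\<bar>x\<bar> \<le> \<bar>R\<bar>") auto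
  then have "range \<phi> \<subseteq> insert 0 (\<phi> ` cball 0 \<bar>R\<bar>)" by blast
  moreover have "bounded (\<phi> ` cball 0 \<bar>R\<bar>)"
    by (intro compact_imp_bounded compact_continuous_image continuous_on_subset[OF cont]) auto
  then have "bounded (insert 0 (\<phi> ` cball 0 \<bar>R\<bar>))" by simp
  ultimately have "bounded (range \<phi>)" by (rule bounded_subset[rotated])
  then obtain M where "\<forall>y\<in>range \<phi>. norm y \<le> M" unfolding bounded_iff by blast
  then show ?thesis using that by blast
qed

lemma integrable_continuous_compact_support:
  fixes \<phi> :: "real \<Rightarrow> 'a::{banach, second_countable_topology}"
  assumes cont: "continuous_on UNIV \<phi>" and supp: "\<And>x. R < \<bar>x\<bar> \<Longrightarrow> \<phi> x = 0"
  shows "integrable lborel \<phi>"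
proof -
  have "integrable lborel (\<lambda>x. indicator {-R..R} x *\<^sub>R \<phi> x)"
    by (intro borel_integrable_compact continuous_on_subset[OF cont]) auto
  moreover have "indicator {-R..R} x *\<^sub>R \<phi> x = \<phi> x" for x
    using supp[of x] by (auto simp: indicator_def abs_le_iff)
  ultimately show ?thesis by simp
qed

lemma Cc_imp_compact_support:
  assumes "\<phi> \<in> Cc"
  obtains R where "continuous_on UNIV \<phi>" "\<And>x. R < \<bar>x\<bar> \<Longrightarrow> \<phi> x = 0"
proof -
  have cont: "continuous_on UNIV \<phi>" and supp: "compact (closure {x. \<phi> x \<noteq> 0})"
    using assms unfolding Cc_def by auto
  from compact_imp_bounded[OF supp]
  obtain R where R: "\<forall>x\<in>closure {x. \<phi> x \<noteq> 0}. \<bar>x\<bar> \<le> R" unfolding bounded_real ..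
  have "\<phi> x = 0" if "R < \<bar>x\<bar>" for x
  proof (rule ccontr)
    assume "\<phi> x \<noteq> 0"
    then have "x \<in> closure {x. \<phi> x \<noteq> 0}" by (intro closure_subset[THEN subsetD]) simp
    then show False using R that by fastforce
  qed
  with cont show ?thesis by (rule that)
qed

definition gaussian_weight :: "real \<Rightarrow> real \<Rightarrow> real" where
  "gaussian_weight s k = exp (- (2 * pi * s * k)\<^sup>2 / 2)"

lemma borel_measurable_gaussian_weight [measurable]: "gaussian_weight s \<in> borel_measurable borel"
  unfolding gaussian_weight_def by measurable

lemma gaussian_weight_nonneg: "0 \<le> gaussian_weight s k"
  unfolding gaussian_weight_def by simp

lemma gaussian_weight_antimono:
  assumes "0 \<le> s" "s \<le> t"
  shows "gaussian_weight t k \<le> gaussian_weight s k"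
proof -
  have "(2 * pi * s * k)\<^sup>2 = s\<^sup>2 * (2 * pi * k)\<^sup>2" "(2 * pi * t * k)\<^sup>2 = t\<^sup>2 * (2 * pi * k)\<^sup>2"
    by (simp_all add: power_mult_distrib)
  moreover have "s\<^sup>2 \<le> t\<^sup>2" using assms by (simp add: power_mono)
  ultimately show ?thesis
    unfolding gaussian_weight_def by (simp add: mult_right_mono)
qed

lemma gaussian_weight_tendsto_1:
  assumes "s \<longlonglongrightarrow> 0"
  shows "(\<lambda>i. gaussian_weight (s i) k) \<longlonglongrightarrow> 1"
proof -
  have "(\<lambda>i. gaussian_weight (s i) k) \<longlonglongrightarrow> exp (- (2 * pi * 0 * k)\<^sup>2 / 2)"
    unfolding gaussian_weight_def by (intro tendsto_intros assms) simp
  then show ?thesis by simp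
qed

lemma gaussian_weight_eq_std_normal_density:
  "gaussian_weight s k = sqrt (2 * pi) * std_normal_density (2 * pi * s * k)"
  by (simp add: gaussian_weight_def std_normal_density_def)

lemma integrable_std_normal_density: "integrable lborel std_normal_density"
  using integrable_std_normal_moment[of 0] by simp

lemma integral_std_normal_density: "(\<integral>x. std_normal_density x \<partial>lborel) = 1"
  using integral_std_normal_moment_even[of 0] by simp

lemma integrable_gaussian_weight:
  assumes "s \<noteq> 0"
  shows "integrable lborel (gaussian_weight s)"
proof -
  have "integrable lborel (\<lambda>k. std_normal_density (0 + (2 * pi * s) * k))"
    by (rule lborel_integrable_real_affine[OF integrable_std_normal_density]) (use assms in simp)
  then show ?thesis
    unfolding gaussian_weight_eq_std_normal_density by (simp add: mult.assoc)
qed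

lemma fourier_gaussian_weight:
  assumes s: "s > 0"
  shows "(\<integral>k. gaussian_weight s k * cis (2 * pi * k * u) \<partial>lborel)
    = complex_of_real (std_normal_density (u / s) / s)"
proof -
  define f where "f x = complex_of_real (std_normal_density x) * cis ((u / s) * x)" for x
  have "char std_normal_distribution (u / s) = complex_of_real (exp (- (u / s)\<^sup>2 / 2))"
    by (simp add: char_std_normal_distribution)
  then have int_f: "(\<integral>x. f x \<partial>lborel) = complex_of_real (exp (- (u / s)\<^sup>2 / 2))"
    unfolding char_def f_def
    by (subst (asm) integral_density) (auto simp: normal_density_nonneg cis_conv_exp scaleR_conv_of_real)
  have "2 * pi * s \<noteq> 0" using s by simp
  then have "(\<integral>x. f x \<partial>lborel) = \<bar>2 * pi * s\<bar> *\<^sub>R (\<integral>k. f (0 + 2 * pi * s * k) \<partial>lborel)"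
    by (rule lborel_integral_real_affine)
  also have "(\<lambda>k. f (0 + 2 * pi * s * k))
      = (\<lambda>k. complex_of_real (gaussian_weight s k / sqrt (2 * pi)) * cis (2 * pi * k * u))"
    using s by (auto simp: f_def fun_eq_iff gaussian_weight_eq_std_normal_density mult_ac)
  finally have "(\<integral>k. gaussian_weight s k * cis (2 * pi * k * u) \<partial>lborel)
      = complex_of_real (sqrt (2 * pi) / (2 * pi * s) * exp (- (u / s)\<^sup>2 / 2))"
    using s int_f by (simp add: field_simps scaleR_conv_of_real)
  also have "sqrt (2 * pi) / (2 * pi * s) = 1 / (sqrt (2 * pi) * s)"
    using s by (simp add: field_simps flip: real_sqrt_mult)
  finally show ?thesis
    by (simp add: std_normal_density_def)
qed

lemma borel_measurable_inv_fourier [measurable]: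
  assumes [measurable]: "\<phi> \<in> borel_measurable borel"
  shows "inv_fourier \<phi> \<in> borel_measurable borel"
  unfolding inv_fourier_def by measurable

lemma norm_inv_fourier_le: "cmod (inv_fourier \<phi> k) \<le> (\<integral>x. cmod (\<phi> x) \<partial>lborel)"
proof -
  have "cmod (inv_fourier \<phi> k) \<le> (\<integral>x. cmod (\<phi> x * cis (2 * pi * k * x)) \<partial>lborel)"
    unfolding inv_fourier_def by (rule integral_norm_bound)
  then show ?thesis by (simp add: norm_mult)
qed

lemma norm_inv_fourier_sq_eq_integral:
  "complex_of_real ((cmod (inv_fourier \<phi> k))\<^sup>2)
    = (\<integral>x. \<phi> x * cis (2 * pi * k * x) * cnj (inv_fourier \<phi> k) \<partial>lborel)"
  by (simp only: complex_norm_square inv_fourier_def integral_mult_left_zero)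

definition gauss_smooth :: "real \<Rightarrow> (real \<Rightarrow> complex) \<Rightarrow> real \<Rightarrow> complex" where
  "gauss_smooth s \<psi> x = (\<integral>v. \<psi> (x - s * v) * complex_of_real (std_normal_density v) \<partial>lborel)"

lemma borel_measurable_gauss_smooth [measurable]:
  assumes [measurable]: "\<psi> \<in> borel_measurable borel"
  shows "gauss_smooth s \<psi> \<in> borel_measurable borel"
  unfolding gauss_smooth_def by measurable

lemma gauss_smooth_eq_convolution:
  assumes s: "s > 0"
  shows "gauss_smooth s \<psi> x
    = (\<integral>y. \<psi> y * complex_of_real (std_normal_density ((x - y) / s) / s) \<partial>lborel)"
proof -
  have "- s \<noteq> 0" using s by simp
  then have "(\<integral>y. \<psi> y * complex_of_real (std_normal_density ((x - y) / s) / s) \<partial>lborel)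
    = \<bar>- s\<bar> *\<^sub>R (\<integral>v. \<psi> (x + - s * v)
        * complex_of_real (std_normal_density ((x - (x + - s * v)) / s) / s) \<partial>lborel)"
    by (rule lborel_integral_real_affine)
  also have "(\<lambda>v. \<psi> (x + - s * v) * complex_of_real (std_normal_density ((x - (x + - s * v)) / s) / s))
      = (\<lambda>v. (1 / s) *\<^sub>R (\<psi> (x - s * v) * complex_of_real (std_normal_density v)))"
    using s by (auto simp: fun_eq_iff scaleR_conv_of_real)
  finally show ?thesis
    unfolding gauss_smooth_def using s by simp
qed

lemma integral_gaussian_weight_cis_cnj_inv_fourier:
  fixes \<phi> :: "real \<Rightarrow> complex"
  assumes \<phi>: "integrable lborel \<phi>" and s: "s > 0"
  shows "(\<integral>k. gaussian_weight s k * cis (2 * pi * k * x) * cnj (inv_fourier \<phi> k) \<partial>lborel)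
    = gauss_smooth s (\<lambda>y. cnj (\<phi> y)) x"
proof -
  have [measurable]: "\<phi> \<in> borel_measurable borel"
    using borel_measurable_integrable[OF \<phi>] by simp
  define H where "H k y = complex_of_real (gaussian_weight s k) * cnj (\<phi> y) * cis (2 * pi * k * (x - y))"
    for k y
  have "gaussian_weight s k * cis (2 * pi * k * x) * cnj (inv_fourier \<phi> k) = (\<integral>y. H k y \<partial>lborel)" for k
  proof -
    have "cnj (inv_fourier \<phi> k) = (\<integral>y. cnj (\<phi> y) * cis (- (2 * pi * k * y)) \<partial>lborel)"
      unfolding inv_fourier_def by (simp add: cis_cnj flip: Bochner_Integration.integral_cnj)
    moreover have "cis (2 * pi * k * x) * cis (- (2 * pi * k * y)) = cis (2 * pi * k * (x - y))" for y
      by (simp add: cis_mult algebra_simps)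
    ultimately show ?thesis
      unfolding H_def by (simp add: mult_ac flip: integral_mult_right_zero)
  qed
  then have "(\<integral>k. gaussian_weight s k * cis (2 * pi * k * x) * cnj (inv_fourier \<phi> k) \<partial>lborel)
      = (\<integral>k. (\<integral>y. H k y \<partial>lborel) \<partial>lborel)"
    by simp
  also have "\<dots> = (\<integral>y. (\<integral>k. H k y \<partial>lborel) \<partial>lborel)"
  proof (rule lborel_integral_swap_product_bound)
    show "(\<lambda>(k, y). H k y) \<in> borel_measurable (lborel \<Otimes>\<^sub>M lborel)"
      unfolding H_def by measurable
    show "cmod (H k y) \<le> gaussian_weight s k * cmod (\<phi> y)" for k y
      using gaussian_weight_nonneg[of s k] by (simp add: H_def norm_mult)
  qed (use s \<phi> in \<open>simp_all add: integrable_gaussian_weight integrable_norm\<close>)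
  also have "\<dots> = (\<integral>y. cnj (\<phi> y) * complex_of_real (std_normal_density ((x - y) / s) / s) \<partial>lborel)"
  proof -
    have "(\<integral>k. H k y \<partial>lborel)
        = (\<integral>k. cnj (\<phi> y) * (gaussian_weight s k * cis (2 * pi * k * (x - y))) \<partial>lborel)" for y
      unfolding H_def by (simp add: mult_ac)
    then show ?thesis
      by (simp add: fourier_gaussian_weight[OF s])
  qed
  also have "\<dots> = gauss_smooth s (\<lambda>y. cnj (\<phi> y)) x"
    by (simp add: gauss_smooth_eq_convolution[OF s])
  finally show ?thesis .
qed

lemma integral_gaussian_weight_norm_inv_fourier_sq:
  fixes \<phi> :: "real \<Rightarrow> complex"
  assumes \<phi>: "integrable lborel \<phi>" and s: "s > 0"
  shows "complex_of_real (\<integral>k. gaussian_weight s k * (cmod (inv_fourier \<phi> k))\<^sup>2 \<partial>lborel)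
    = (\<integral>x. \<phi> x * gauss_smooth s (\<lambda>y. cnj (\<phi> y)) x \<partial>lborel)"
proof -
  have [measurable]: "\<phi> \<in> borel_measurable borel"
    using borel_measurable_integrable[OF \<phi>] by simp
  define F where "F = inv_fourier \<phi>"
  have [measurable]: "F \<in> borel_measurable borel"
    unfolding F_def by measurable
  define G where "G k x = complex_of_real (gaussian_weight s k) * \<phi> x * cis (2 * pi * k * x) * cnj (F k)"
    for k x
  have "complex_of_real (gaussian_weight s k * (cmod (F k))\<^sup>2) = (\<integral>x. G k x \<partial>lborel)" for k
    unfolding G_def F_def of_real_mult norm_inv_fourier_sq_eq_integral
    by (simp add: mult_ac flip: integral_mult_right_zero)
  then have "complex_of_real (\<integral>k. gaussian_weight s k * (cmod (F k))\<^sup>2 \<partial>lborel)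
      = (\<integral>k. (\<integral>x. G k x \<partial>lborel) \<partial>lborel)"
    by (simp flip: integral_complex_of_real)
  also have "\<dots> = (\<integral>x. (\<integral>k. G k x \<partial>lborel) \<partial>lborel)"
  proof (rule lborel_integral_swap_product_bound)
    define P where "P = (\<integral>x. cmod (\<phi> x) \<partial>lborel)"
    show "(\<lambda>(k, x). G k x) \<in> borel_measurable (lborel \<Otimes>\<^sub>M lborel)"
      unfolding G_def by measurable
    show "integrable lborel (\<lambda>k. gaussian_weight s k * P)"
      using s by (intro integrable_mult_left integrable_gaussian_weight) simp
    show "cmod (G k x) \<le> gaussian_weight s k * P * cmod (\<phi> x)" for k x
    proof -
      have "cmod (G k x) = gaussian_weight s k * cmod (\<phi> x) * cmod (F k)"
        using gaussian_weight_nonneg[of s k] by (simp add: G_def norm_mult)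
      also have "\<dots> \<le> gaussian_weight s k * cmod (\<phi> x) * P"
        unfolding F_def P_def using gaussian_weight_nonneg[of s k]
        by (intro mult_left_mono norm_inv_fourier_le) auto
      finally show ?thesis by (simp add: mult_ac)
    qed
  qed (use \<phi> in \<open>rule integrable_norm\<close>)
  also have "\<dots> = (\<integral>x. \<phi> x * gauss_smooth s (\<lambda>y. cnj (\<phi> y)) x \<partial>lborel)"
  proof -
    have "(\<integral>k. G k x \<partial>lborel)
        = \<phi> x * (\<integral>k. gaussian_weight s k * cis (2 * pi * k * x) * cnj (F k) \<partial>lborel)" for x
      unfolding G_def by (simp add: mult_ac flip: integral_mult_right_zero)
    then show ?thesis
      unfolding F_def by (simp add: integral_gaussian_weight_cis_cnj_inv_fourier[OF \<phi> s])
  qed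
  finally show ?thesis unfolding F_def .
qed

lemma integrable_gauss_smooth_integrand:
  assumes [measurable]: "\<psi> \<in> borel_measurable borel" and bound: "\<And>y. cmod (\<psi> y) \<le> M"
  shows "integrable lborel (\<lambda>v. \<psi> (x - s * v) * complex_of_real (std_normal_density v))"
proof (rule Bochner_Integration.integrable_bound)
  show "integrable lborel (\<lambda>v. M * std_normal_density v)"
    by (intro integrable_mult_right integrable_std_normal_density)
  show "AE v in lborel. norm (\<psi> (x - s * v) * complex_of_real (std_normal_density v))
      \<le> norm (M * std_normal_density v)"
  proof (rule AE_I2)
    fix v
    have "cmod (\<psi> (x - s * v)) * std_normal_density v \<le> \<bar>M\<bar> * std_normal_density v"
      using order_trans[OF bound abs_ge_self] normal_density_nonneg by (rule mult_right_mono)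
    then show "norm (\<psi> (x - s * v) * complex_of_real (std_normal_density v))
        \<le> norm (M * std_normal_density v)"
      by (simp add: norm_mult abs_mult normal_density_nonneg)
  qed
qed measurable

lemma norm_gauss_smooth_le:
  assumes [measurable]: "\<psi> \<in> borel_measurable borel" and bound: "\<And>y. cmod (\<psi> y) \<le> M"
  shows "cmod (gauss_smooth s \<psi> x) \<le> M"
proof -
  have "cmod (gauss_smooth s \<psi> x) \<le> (\<integral>v. M * std_normal_density v \<partial>lborel)"
    unfolding gauss_smooth_def
  proof (rule Bochner_Integration.integral_norm_bound_integral)
    show "integrable lborel (\<lambda>v. M * std_normal_density v)"
      by (intro integrable_mult_right integrable_std_normal_density)
    show "cmod (\<psi> (x - s * v) * complex_of_real (std_normal_density v)) \<le> M * std_normal_density v" for v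
      using bound by (simp add: norm_mult normal_density_nonneg mult_right_mono)
  qed (rule integrable_gauss_smooth_integrand[OF assms])
  also have "\<dots> = M"
    using integral_std_normal_density by simp
  finally show ?thesis .
qed

lemma gauss_smooth_tendsto:
  assumes [measurable]: "\<psi> \<in> borel_measurable borel" and bound: "\<And>y. cmod (\<psi> y) \<le> M"
    and cont: "isCont \<psi> x" and s: "s \<longlonglongrightarrow> 0"
  shows "(\<lambda>i. gauss_smooth (s i) \<psi> x) \<longlonglongrightarrow> \<psi> x"
proof -
  have "(\<lambda>i. gauss_smooth (s i) \<psi> x) \<longlonglongrightarrow> (\<integral>v. \<psi> x * complex_of_real (std_normal_density v) \<partial>lborel)"
    unfolding gauss_smooth_def
  proof (rule integral_dominated_convergence[where w="\<lambda>v. M * std_normal_density v"])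
    show "integrable lborel (\<lambda>v. M * std_normal_density v)"
      by (intro integrable_mult_right integrable_std_normal_density)
    show "AE v in lborel. (\<lambda>i. \<psi> (x - s i * v) * complex_of_real (std_normal_density v))
        \<longlonglongrightarrow> \<psi> x * complex_of_real (std_normal_density v)"
    proof (rule AE_I2)
      fix v
      have "(\<lambda>i. x - s i * v) \<longlonglongrightarrow> x - 0 * v" by (intro tendsto_intros s)
      then have "(\<lambda>i. \<psi> (x - s i * v)) \<longlonglongrightarrow> \<psi> x"
        using isCont_tendsto_compose[OF cont] by simp
      then show "(\<lambda>i. \<psi> (x - s i * v) * complex_of_real (std_normal_density v))
          \<longlonglongrightarrow> \<psi> x * complex_of_real (std_normal_density v)"
        by (rule tendsto_mult_right)
    qed
    show "AE v in lborel. cmod (\<psi> (x - s i * v) * complex_of_real (std_normal_density v))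
        \<le> M * std_normal_density v" for i
      using bound by (auto simp: norm_mult normal_density_nonneg intro!: mult_right_mono)
  qed measurable
  also have "(\<integral>v. \<psi> x * complex_of_real (std_normal_density v) \<partial>lborel) = \<psi> x"
    using integral_std_normal_density by simp
  finally show ?thesis .
qed

lemma integral_mult_gauss_smooth_tendsto:
  assumes \<phi>: "integrable lborel \<phi>" and cont: "continuous_on UNIV \<psi>"
    and bound: "\<And>y. cmod (\<psi> y) \<le> M" and s: "s \<longlonglongrightarrow> 0"
  shows "(\<lambda>i. \<integral>x. \<phi> x * gauss_smooth (s i) \<psi> x \<partial>lborel) \<longlonglongrightarrow> (\<integral>x. \<phi> x * \<psi> x \<partial>lborel)"
proof (rule integral_dominated_convergence[where w="\<lambda>x. M * cmod (\<phi> x)"])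
  have \<psi>_meas [measurable]: "\<psi> \<in> borel_measurable borel"
    using cont by (rule borel_measurable_continuous_onI)
  have [measurable]: "\<phi> \<in> borel_measurable borel"
    using borel_measurable_integrable[OF \<phi>] by simp
  show "integrable lborel (\<lambda>x. M * cmod (\<phi> x))"
    using \<phi> by (intro integrable_mult_right integrable_norm)
  show "(\<lambda>x. \<phi> x * \<psi> x) \<in> borel_measurable lborel" by measurable
  show "(\<lambda>x. \<phi> x * gauss_smooth (s i) \<psi> x) \<in> borel_measurable lborel" for i
    by measurable
  show "AE x in lborel. (\<lambda>i. \<phi> x * gauss_smooth (s i) \<psi> x) \<longlonglongrightarrow> \<phi> x * \<psi> x"
    using cont bound s
    by (intro AE_I2 tendsto_mult_left gauss_smooth_tendsto) (auto simp: continuous_on_eq_continuous_at)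
  show "AE x in lborel. cmod (\<phi> x * gauss_smooth (s i) \<psi> x) \<le> M * cmod (\<phi> x)" for i
  proof (rule AE_I2)
    fix x
    have "cmod (gauss_smooth (s i) \<psi> x) * cmod (\<phi> x) \<le> M * cmod (\<phi> x)"
      using norm_gauss_smooth_le[OF \<psi>_meas bound] by (rule mult_right_mono) simp
    then show "cmod (\<phi> x * gauss_smooth (s i) \<psi> x) \<le> M * cmod (\<phi> x)"
      by (simp add: norm_mult mult.commute)
  qed
qed

lemma integrable_gaussian_weight_norm_inv_fourier_sq:
  fixes \<phi> :: "real \<Rightarrow> complex"
  assumes [measurable]: "\<phi> \<in> borel_measurable borel" and "s \<noteq> 0"
  shows "integrable lborel (\<lambda>k. gaussian_weight s k * (cmod (inv_fourier \<phi> k))\<^sup>2)"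
proof (rule Bochner_Integration.integrable_bound)
  define P where "P = (\<integral>x. cmod (\<phi> x) \<partial>lborel)"
  show "integrable lborel (\<lambda>k. gaussian_weight s k * P\<^sup>2)"
    using \<open>s \<noteq> 0\<close> by (intro integrable_mult_left integrable_gaussian_weight)
  show "AE k in lborel. norm (gaussian_weight s k * (cmod (inv_fourier \<phi> k))\<^sup>2)
      \<le> norm (gaussian_weight s k * P\<^sup>2)"
    using norm_inv_fourier_le[of \<phi>]
    by (auto simp: P_def gaussian_weight_nonneg intro!: mult_left_mono power_mono)
qed measurable

lemma integral_gaussian_weight_norm_inv_fourier_sq_tendsto:
  fixes \<phi> :: "real \<Rightarrow> complex"
  assumes \<phi>: "integrable lborel \<phi>" and cont: "continuous_on UNIV \<phi>" and M: "\<And>x. cmod (\<phi> x) \<le> M"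
    and s_pos: "\<And>i. 0 < s i" and s_lim: "s \<longlonglongrightarrow> 0"
  shows "(\<lambda>i. \<integral>k. gaussian_weight (s i) k * (cmod (inv_fourier \<phi> k))\<^sup>2 \<partial>lborel)
    \<longlonglongrightarrow> (\<integral>x. (cmod (\<phi> x))\<^sup>2 \<partial>lborel)"
proof -
  have "(\<lambda>i. complex_of_real (\<integral>k. gaussian_weight (s i) k * (cmod (inv_fourier \<phi> k))\<^sup>2 \<partial>lborel))
      \<longlonglongrightarrow> (\<integral>x. \<phi> x * cnj (\<phi> x) \<partial>lborel)"
    unfolding integral_gaussian_weight_norm_inv_fourier_sq[OF \<phi> s_pos]
    using M by (intro integral_mult_gauss_smooth_tendsto[OF \<phi> _ _ s_lim] continuous_intros cont) auto
  also have "(\<integral>x. \<phi> x * cnj (\<phi> x) \<partial>lborel) = complex_of_real (\<integral>x. (cmod (\<phi> x))\<^sup>2 \<partial>lborel)"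
    by (simp flip: complex_norm_square integral_complex_of_real)
  finally show ?thesis
    unfolding tendsto_of_real_iff .
qed

theorem plancherel_continuous_compact_support:
  fixes \<phi> :: "real \<Rightarrow> complex"
  assumes cont: "continuous_on UNIV \<phi>" and supp: "\<And>x. R < \<bar>x\<bar> \<Longrightarrow> \<phi> x = 0"
  shows "integrable lborel (\<lambda>k. (cmod (inv_fourier \<phi> k))\<^sup>2)"
    and "(\<integral>k. (cmod (inv_fourier \<phi> k))\<^sup>2 \<partial>lborel) = (\<integral>x. (cmod (\<phi> x))\<^sup>2 \<partial>lborel)"
proof -
  obtain M where M: "\<And>x. cmod (\<phi> x) \<le> M"
    using bounded_continuous_compact_support[OF cont supp] by blast
  have \<phi>: "integrable lborel \<phi>"
    using cont supp by (rule integrable_continuous_compact_support)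
  have [measurable]: "\<phi> \<in> borel_measurable borel"
    using cont by (rule borel_measurable_continuous_onI)
  define s where "s i = inverse (real (Suc i))" for i
  have s_pos: "0 < s i" for i
    unfolding s_def by simp
  have s_lim: "s \<longlonglongrightarrow> 0"
    unfolding s_def by (rule LIMSEQ_inverse_real_of_nat)
  define f where "f i k = gaussian_weight (s i) k * (cmod (inv_fourier \<phi> k))\<^sup>2" for i k
  have f_int: "integrable lborel (f i)" for i
    unfolding f_def using s_pos[of i]
    by (intro integrable_gaussian_weight_norm_inv_fourier_sq) auto
  have f_mono: "AE k in lborel. mono (\<lambda>i. f i k)"
    unfolding f_def using s_pos
    by (intro AE_I2 incseq_SucI mult_right_mono gaussian_weight_antimono)
      (auto simp: s_def field_simps)
  have f_lim: "AE k in lborel. (\<lambda>i. f i k) \<longlonglongrightarrow> (cmod (inv_fourier \<phi> k))\<^sup>2"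
  proof (rule AE_I2)
    fix k
    have "(\<lambda>i. f i k) \<longlonglongrightarrow> 1 * (cmod (inv_fourier \<phi> k))\<^sup>2"
      unfolding f_def by (intro tendsto_mult_right gaussian_weight_tendsto_1 s_lim)
    then show "(\<lambda>i. f i k) \<longlonglongrightarrow> (cmod (inv_fourier \<phi> k))\<^sup>2" by simp
  qed
  have integral_f_lim: "(\<lambda>i. \<integral>k. f i k \<partial>lborel) \<longlonglongrightarrow> (\<integral>x. (cmod (\<phi> x))\<^sup>2 \<partial>lborel)"
    unfolding f_def
    using \<phi> cont M s_pos s_lim by (rule integral_gaussian_weight_norm_inv_fourier_sq_tendsto)
  have "(\<lambda>k. (cmod (inv_fourier \<phi> k))\<^sup>2) \<in> borel_measurable lborel"
    by measurable
  note convergence = f_int f_mono f_lim integral_f_lim this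
  show "integrable lborel (\<lambda>k. (cmod (inv_fourier \<phi> k))\<^sup>2)"
    using integrable_monotone_convergence[OF convergence] .
  show "(\<integral>k. (cmod (inv_fourier \<phi> k))\<^sup>2 \<partial>lborel) = (\<integral>x. (cmod (\<phi> x))\<^sup>2 \<partial>lborel)"
    using integral_monotone_convergence[OF convergence] .
qed

lemma fourier_transform_dirac: "is_fourier_transform (return borel 0) lborel"
  unfolding is_fourier_transform_def
proof
  fix \<phi> assume "\<phi> \<in> Cc"
  then obtain R where cont: "continuous_on UNIV \<phi>" and supp: "\<And>x. R < \<bar>x\<bar> \<Longrightarrow> \<phi> x = 0"
    using Cc_imp_compact_support by blast
  have [measurable]: "\<phi> \<in> borel_measurable borel"
    using cont by (rule borel_measurable_continuous_onI)
  have "conv_tilde \<phi> \<in> borel_measurable borel"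
    unfolding conv_tilde_def by measurable
  then have "integral\<^sup>L (return borel 0) (conv_tilde \<phi>) = (\<integral>y. \<phi> y * cnj (\<phi> y) \<partial>lborel)"
    by (simp add: integral_return conv_tilde_def)
  also have "\<dots> = complex_of_real (\<integral>x. (cmod (\<phi> x))\<^sup>2 \<partial>lborel)"
    by (simp flip: complex_norm_square integral_complex_of_real)
  also have "\<dots> = complex_of_real (\<integral>k. (cmod (inv_fourier \<phi> k))\<^sup>2 \<partial>lborel)"
    using plancherel_continuous_compact_support(2)[OF cont supp] by simp
  finally show "integrable lborel (\<lambda>k. (cmod (inv_fourier \<phi> k))\<^sup>2) \<and>
      integral\<^sup>L (return borel 0) (conv_tilde \<phi>) = complex_of_real (\<integral>k. (cmod (inv_fourier \<phi> k))\<^sup>2 \<partial>lborel)"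
    using plancherel_continuous_compact_support(1)[OF cont supp] by simp
qed

section \<open>Sequences with gaps tending to infinity\<close>

lemma increments_ge_imp_diff_ge:
  fixes a :: "nat \<Rightarrow> real"
  assumes inc: "\<And>k. m \<le> k \<Longrightarrow> c \<le> a (Suc k) - a k" and "m \<le> n"
  shows "c * real (n - m) \<le> a n - a m"
  using \<open>m \<le> n\<close>
proof (induction n rule: dec_induct)
  case base
  then show ?case by simp
next
  case (step n)
  have "c * real (Suc n - m) = c * real (n - m) + c"
    using step.hyps by (simp add: Suc_diff_le distrib_left)
  also have "\<dots> \<le> (a n - a m) + (a (Suc n) - a n)"
    using step.IH inc[OF step.hyps(1)] by simp
  finally show ?case by simp
qed

definition close_pairs :: "real set \<Rightarrow> real \<Rightarrow> (real \<times> real) set" where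
  "close_pairs L R = {(x, y). x \<in> L \<and> y \<in> L \<and> x \<noteq> y \<and> \<bar>x - y\<bar> \<le> R}"

lemma tendsto_at_top_imp_locally_finite_range:
  fixes a :: "nat \<Rightarrow> real"
  assumes "filterlim a at_top sequentially"
  shows "locally_finite_set (range a)"
  unfolding locally_finite_set_def
proof (intro allI impI)
  fix B :: "real set"
  assume "bounded B"
  then obtain C where C: "\<And>x. x \<in> B \<Longrightarrow> \<bar>x\<bar> \<le> C"
    unfolding bounded_real by blast
  have "\<forall>\<^sub>F n in sequentially. C + 1 \<le> a n"
    using assms unfolding filterlim_at_top by blast
  then obtain N where N: "\<And>n. N \<le> n \<Longrightarrow> C + 1 \<le> a n"
    unfolding eventually_sequentially by blast
  have "n < N" if "a n \<in> B" for n
    using C[OF that] N[of n] by (cases "N \<le> n") auto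
  then have "B \<inter> range a \<subseteq> a ` {..<N}"
    by auto
  then show "finite (B \<inter> range a)"
    by (rule finite_subset) simp
qed

lemma tendsto_at_top_imp_infinite_range:
  fixes a :: "nat \<Rightarrow> real"
  assumes "filterlim a at_top sequentially"
  shows "infinite (range a)"
proof
  assume "finite (range a)"
  have "\<forall>\<^sub>F n in sequentially. Max (range a) + 1 \<le> a n"
    using assms unfolding filterlim_at_top by blast
  then obtain N where "Max (range a) + 1 \<le> a N"
    unfolding eventually_sequentially by blast
  moreover have "a N \<le> Max (range a)"
    using \<open>finite (range a)\<close> by simp
  ultimately show False by simp
qed

lemma finite_close_pairs_imp_FLC:
  assumes "\<And>R. finite (close_pairs L R)"
  shows "FLC L"
  unfolding FLC_def locally_finite_set_def
proof (intro allI impI)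
  fix B :: "real set"
  assume "bounded B"
  then obtain R where R: "\<And>z. z \<in> B \<Longrightarrow> \<bar>z\<bar> \<le> R"
    unfolding bounded_real by blast
  have "B \<inter> diff_set L \<subseteq> insert 0 ((\<lambda>(x, y). x - y) ` close_pairs L R)"
    using R unfolding diff_set_def close_pairs_def by (force simp: image_iff)
  then show "finite (B \<inter> diff_set L)"
    by (rule finite_subset) (simp add: assms)
qed

context
  fixes a :: "nat \<Rightarrow> real"
  assumes gaps: "filterlim (\<lambda>n. a (Suc n) - a n) at_top sequentially"
begin

lemma eventually_increments_ge:
  obtains N where "\<And>k. N \<le> k \<Longrightarrow> c \<le> a (Suc k) - a k"
proof -
  have "\<forall>\<^sub>F k in sequentially. c \<le> a (Suc k) - a k"
    using gaps unfolding filterlim_at_top by blast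
  with that show ?thesis
    unfolding eventually_sequentially by blast
qed

lemma gaps_tendsto_imp_eventually_separated:
  obtains N where "\<And>m n. N \<le> m \<Longrightarrow> m < n \<Longrightarrow> c < a n - a m"
proof -
  obtain N where N: "\<And>k. N \<le> k \<Longrightarrow> \<bar>c\<bar> + 1 \<le> a (Suc k) - a k"
    using eventually_increments_ge by blast
  have "c < a n - a m" if "N \<le> m" "m < n" for m n
  proof -
    have "(\<bar>c\<bar> + 1) * real (n - m) \<le> a n - a m"
      using N that by (intro increments_ge_imp_diff_ge) auto
    moreover have "1 \<le> real (n - m)"
      using that by simp
    then have "\<bar>c\<bar> + 1 \<le> (\<bar>c\<bar> + 1) * real (n - m)"
      using mult_left_mono[of 1 "real (n - m)" "\<bar>c\<bar> + 1"] by simp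
    ultimately show ?thesis by linarith
  qed
  with that show ?thesis by blast
qed

lemma gaps_tendsto_imp_tendsto_at_top: "filterlim a at_top sequentially"
  unfolding filterlim_at_top
proof
  fix Z
  obtain K where K: "\<And>k. K \<le> k \<Longrightarrow> 1 \<le> a (Suc k) - a k"
    using eventually_increments_ge by blast
  have "Z \<le> a n" if "K + nat \<lceil>Z - a K\<rceil> \<le> n" for n
  proof -
    have "1 * real (n - K) \<le> a n - a K"
      using K that by (intro increments_ge_imp_diff_ge) auto
    moreover have "Z - a K \<le> real (n - K)"
      using that by linarith
    ultimately show ?thesis by simp
  qed
  then show "\<forall>\<^sub>F n in sequentially. Z \<le> a n"
    unfolding eventually_sequentially by blast
qed


lemma finite_close_pairs_range: "finite (close_pairs (range a) R)"
proof -
  obtain N where N: "\<And>m n. N \<le> m \<Longrightarrow> m < n \<Longrightarrow> R < a n - a m"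
    using gaps_tendsto_imp_eventually_separated by blast
  obtain C where C: "\<And>i. i < N \<Longrightarrow> \<bar>a i\<bar> \<le> C"
    using finite_imp_bounded[of "a ` {..<N}"] unfolding bounded_real by auto
  define T where "T = {-(C + \<bar>R\<bar>)..C + \<bar>R\<bar>} \<inter> range a"
  have T: "finite T"
    unfolding T_def using gaps_tendsto_imp_tendsto_at_top
    by (simp add: tendsto_at_top_imp_locally_finite_range[unfolded locally_finite_set_def])
  have "a m \<in> T \<and> a n \<in> T" if "(a m, a n) \<in> close_pairs (range a) R" for m n
  proof -
    from that have "m \<noteq> n" "\<bar>a m - a n\<bar> \<le> R"
      unfolding close_pairs_def by auto
    have "m < N \<or> n < N"
    proof (rule ccontr)
      assume "\<not> (m < N \<or> n < N)"
      then have "R < \<bar>a m - a n\<bar>"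
        using N[of m n] N[of n m] \<open>m \<noteq> n\<close> abs_ge_self[of "a m - a n"] abs_ge_minus_self[of "a m - a n"]
        by (cases m n rule: linorder_cases) auto
      with \<open>\<bar>a m - a n\<bar> \<le> R\<close> show False by simp
    qed
    then show "a m \<in> T \<and> a n \<in> T"
      using C[of m] C[of n] \<open>\<bar>a m - a n\<bar> \<le> R\<close> unfolding T_def by auto
  qed
  then have "close_pairs (range a) R \<subseteq> T \<times> T"
    unfolding close_pairs_def by auto
  then show ?thesis
    by (rule finite_subset) (simp add: T)
qed

end

section \<open>The counting autocorrelation\<close>

lemma integral_density_count_space_finite_support:
  fixes f :: "'a \<Rightarrow> 'b::{banach, second_countable_topology}"
  assumes D: "finite D" and supp: "\<And>z. z \<notin> D \<Longrightarrow> c z = 0" and nonneg: "\<And>z. 0 \<le> c z"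
  shows "integral\<^sup>L (density (count_space UNIV) (\<lambda>z. ennreal (c z))) f = (\<Sum>z\<in>D. c z *\<^sub>R f z)"
proof -
  have "integral\<^sup>L (density (count_space UNIV) (\<lambda>z. ennreal (c z))) f
      = (\<integral>z. c z *\<^sub>R f z \<partial>count_space UNIV)"
    using nonneg by (simp add: integral_density)
  also have "\<dots> = (\<Sum>z | z \<in> UNIV \<and> c z *\<^sub>R f z \<noteq> 0. c z *\<^sub>R f z)"
    by (rule lebesgue_integral_count_space_finite_support)
      (rule finite_subset[OF _ D], use supp in auto)
  also have "\<dots> = (\<Sum>z\<in>D. c z *\<^sub>R f z)"
    by (rule sum.mono_neutral_left) (use D supp in auto)
  finally show ?thesis .
qed

lemma integral_gamma_fin:
  fixes \<phi> :: "real \<Rightarrow> complex"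
  assumes fin: "finite F" and ne: "F \<noteq> {}"
  shows "integral\<^sup>L (gamma_fin F) \<phi> = (\<Sum>(x, y)\<in>F \<times> F. \<phi> (x - y)) / of_nat (card F)"
proof -
  define D where "D = (\<lambda>(x, y). x - y) ` (F \<times> F)"
  define fibre where "fibre z = {p \<in> F \<times> F. (\<lambda>(x, y). x - y) p = z}" for z
  have "fibre z = {(x, y). x \<in> F \<and> y \<in> F \<and> x - y = z}" for z
    unfolding fibre_def by auto
  then have "gamma_fin F = density (count_space UNIV) (\<lambda>z. ennreal (real (card (fibre z)) / real (card F)))"
    unfolding gamma_fin_def using ne by simp
  also have "integral\<^sup>L \<dots> \<phi> = (\<Sum>z\<in>D. (real (card (fibre z)) / real (card F)) *\<^sub>R \<phi> z)"
  proof (rule integral_density_count_space_finite_support)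
    show "finite D"
      unfolding D_def using fin by simp
    show "real (card (fibre z)) / real (card F) = 0" if "z \<notin> D" for z
    proof -
      have "fibre z = {}"
        using that unfolding D_def fibre_def by force
      then show ?thesis by simp
    qed
  qed simp
  also have "\<dots> = (\<Sum>z\<in>D. \<Sum>(x, y)\<in>fibre z. \<phi> (x - y)) / of_nat (card F)"
  proof -
    have "(\<Sum>(x, y)\<in>fibre z. \<phi> (x - y)) = of_nat (card (fibre z)) * \<phi> z" for z
      by (simp add: fibre_def case_prod_beta sum.cong[of _ _ _ "\<lambda>_. \<phi> z"])
    then show ?thesis
      by (simp add: sum_divide_distrib scaleR_conv_of_real)
  qed
  also have "(\<Sum>z\<in>D. \<Sum>(x, y)\<in>fibre z. \<phi> (x - y)) = (\<Sum>(x, y)\<in>F \<times> F. \<phi> (x - y))"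
    unfolding fibre_def D_def using fin by (intro sum.group) auto
  finally show ?thesis .
qed

lemma sum_Times_self_split_diagonal:
  assumes fin: "finite F"
  shows "(\<Sum>p\<in>F \<times> F. g p) = (\<Sum>x\<in>F. g (x, x)) + (\<Sum>p\<in>{(x, y) \<in> F \<times> F. x \<noteq> y}. g p)"
proof -
  define Off where "Off = {(x, y) \<in> F \<times> F. x \<noteq> y}"
  have "finite Off"
    unfolding Off_def by (rule finite_subset[OF _ finite_cartesian_product[OF fin fin]]) auto
  have diagonal_Off: "F \<times> F = (\<lambda>x. (x, x)) ` F \<union> Off"
    unfolding Off_def by auto
  have "(\<Sum>p\<in>F \<times> F. g p) = sum g ((\<lambda>x. (x, x)) ` F) + sum g Off"
    unfolding diagonal_Off
    by (rule sum.union_disjoint) (use fin \<open>finite Off\<close> in \<open>auto simp: Off_def\<close>)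
  also have "sum g ((\<lambda>x. (x, x)) ` F) = (\<Sum>x\<in>F. g (x, x))"
    by (simp add: sum.reindex inj_on_def)
  finally show ?thesis
    unfolding Off_def .
qed

lemma norm_integral_gamma_fin_diff_le:
  fixes \<phi> :: "real \<Rightarrow> complex"
  assumes fin: "finite F" and ne: "F \<noteq> {}" and sub: "F \<subseteq> L"
    and close: "finite (close_pairs L R)"
    and supp: "\<And>z. R < \<bar>z\<bar> \<Longrightarrow> \<phi> z = 0" and M: "\<And>z. cmod (\<phi> z) \<le> M"
  shows "cmod (integral\<^sup>L (gamma_fin F) \<phi> - \<phi> 0) \<le> real (card (close_pairs L R)) * M / real (card F)"
proof -
  define g where "g = (\<lambda>(x, y). \<phi> (x - y))"
  define Off where "Off = {(x, y) \<in> F \<times> F. x \<noteq> y}"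
  have "integral\<^sup>L (gamma_fin F) \<phi> - \<phi> 0 = sum g Off / of_nat (card F)"
    using fin ne
    by (simp add: integral_gamma_fin sum_Times_self_split_diagonal g_def Off_def field_simps)
  then have "cmod (integral\<^sup>L (gamma_fin F) \<phi> - \<phi> 0) = cmod (sum g Off) / real (card F)"
    by (simp add: norm_divide)
  also have "\<dots> \<le> real (card (close_pairs L R)) * M / real (card F)"
  proof (rule divide_right_mono)
    have "sum g Off = sum g (Off \<inter> close_pairs L R)"
    proof (rule sum.mono_neutral_right)
      show "finite Off"
        unfolding Off_def by (rule finite_subset[OF _ finite_cartesian_product[OF fin fin]]) auto
      show "\<forall>p\<in>Off - Off \<inter> close_pairs L R. g p = 0"
        using sub unfolding Off_def close_pairs_def g_def by (auto intro!: supp)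
    qed auto
    then have "cmod (sum g Off) \<le> (\<Sum>p\<in>Off \<inter> close_pairs L R. cmod (g p))"
      by (simp add: norm_sum)
    also have "\<dots> \<le> of_nat (card (Off \<inter> close_pairs L R)) * M"
      by (rule sum_bounded_above) (simp add: g_def M split: prod.split)
    also have "\<dots> \<le> real (card (close_pairs L R)) * M"
      using close M[of 0] by (intro mult_right_mono) (auto simp: card_mono intro: order_trans[OF norm_ge_zero])
    finally show "cmod (sum g Off) \<le> real (card (close_pairs L R)) * M" .
  qed simp
  finally show ?thesis .
qed

lemma finite_close_pairs_imp_counting_autocorrelation_dirac:
  assumes close: "\<And>R. finite (close_pairs L R)" and fin: "\<And>n. finite (L \<inter> A n)"
    and card: "filterlim (\<lambda>n. card (A n \<inter> L)) at_top sequentially"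
  shows "is_counting_autocorrelation L A (return borel 0)"
  unfolding is_counting_autocorrelation_def vague_conv_def
proof
  fix \<phi> assume "\<phi> \<in> Cc"
  then obtain R where cont: "continuous_on UNIV \<phi>" and supp: "\<And>x. R < \<bar>x\<bar> \<Longrightarrow> \<phi> x = 0"
    using Cc_imp_compact_support by blast
  obtain M where M: "\<And>x. cmod (\<phi> x) \<le> M"
    using bounded_continuous_compact_support[OF cont supp] by blast
  have "integral\<^sup>L (return borel 0) \<phi> = \<phi> 0"
    using cont by (intro integral_return borel_measurable_continuous_onI) auto
  moreover have "(\<lambda>n. integral\<^sup>L (gamma_fin (L \<inter> A n)) \<phi>) \<longlonglongrightarrow> \<phi> 0"
  proof (rule LIM_zero_cancel, rule Lim_null_comparison)
    have "\<forall>\<^sub>F n in sequentially. 1 \<le> card (A n \<inter> L)"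
      using card unfolding filterlim_at_top by blast
    then show "\<forall>\<^sub>F n in sequentially. cmod (integral\<^sup>L (gamma_fin (L \<inter> A n)) \<phi> - \<phi> 0)
        \<le> real (card (close_pairs L R)) * M / real (card (A n \<inter> L))"
    proof eventually_elim
      case (elim n)
      then have "L \<inter> A n \<noteq> {}" by (auto simp: Int_commute)
      with norm_integral_gamma_fin_diff_le[OF fin _ _ close supp M] show ?case
        by (simp add: Int_commute)
    qed
    have "filterlim (\<lambda>n. real (card (A n \<inter> L))) at_top sequentially"
      using filterlim_real_sequentially card by (rule filterlim_compose)
    then show "(\<lambda>n. real (card (close_pairs L R)) * M / real (card (A n \<inter> L))) \<longlonglongrightarrow> 0"
      by (intro tendsto_divide_0[OF tendsto_const] filterlim_at_top_imp_at_infinity)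
  qed
  ultimately show "(\<lambda>n. integral\<^sup>L (gamma_fin (L \<inter> A n)) \<phi>) \<longlonglongrightarrow> integral\<^sup>L (return borel 0) \<phi>"
    by simp
qed

lemma exhausting_imp_eventually_subset:
  assumes "finite T" and mono: "\<And>n. A n \<subseteq> A (Suc n)" and exh: "(\<Union>n. A n) = UNIV"
  shows "\<forall>\<^sub>F n in sequentially. T \<subseteq> A n"
  using \<open>finite T\<close>
proof induction
  case empty
  then show ?case by simp
next
  case (insert x T)
  obtain m where "x \<in> A m"
    using exh by blast
  then have "\<forall>\<^sub>F n in sequentially. x \<in> A n"
    unfolding eventually_sequentially using lift_Suc_mono_le[of A, OF mono] by blast
  with insert.IH show ?case
    by eventually_elim simp
qed

lemma exhausting_imp_card_Int_tendsto_at_top: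
  assumes "infinite S" and fin: "\<And>n. finite (A n \<inter> S)"
    and mono: "\<And>n. A n \<subseteq> A (Suc n)" and exh: "(\<Union>n. A n) = UNIV"
  shows "filterlim (\<lambda>n. card (A n \<inter> S)) at_top sequentially"
  unfolding filterlim_at_top
proof
  fix K
  obtain T where T: "finite T" "card T = K" "T \<subseteq> S"
    using infinite_arbitrarily_large[OF \<open>infinite S\<close>] by blast
  from exhausting_imp_eventually_subset[OF \<open>finite T\<close> mono exh]
  show "\<forall>\<^sub>F n in sequentially. K \<le> card (A n \<inter> S)"
  proof eventually_elim
    case (elim n)
    with T have "T \<subseteq> A n \<inter> S" by blast
    with card_mono[OF fin] show ?case
      using T by auto
  qed
qed

theorem lemma4p3:
  fixes a :: "nat \<Rightarrow> real"
  assumes gaps: "filterlim (\<lambda>n. a (Suc n) - a n) at_top sequentially"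
  shows "FLC (range a) \<and>
    (\<forall>A. van_Hove A \<and> filterlim (\<lambda>n. card (A n \<inter> range a)) at_top sequentially \<longrightarrow>
       is_counting_autocorrelation (range a) A (return borel 0) \<and>
       is_fourier_transform (return borel 0) lborel) \<and>
    (\<forall>A. van_Hove A \<and> (\<forall>n. A n \<subseteq> A (Suc n)) \<and> (\<Union>n. A n) = UNIV \<longrightarrow>
       filterlim (\<lambda>n. card (A n \<inter> range a)) at_top sequentially \<and>
       is_counting_autocorrelation (range a) A (return borel 0) \<and>
       is_fourier_transform (return borel 0) lborel)"
proof -
  have close: "finite (close_pairs (range a) R)" for R
    using gaps by (rule finite_close_pairs_range)
  have a_lim: "filterlim a at_top sequentially"
    using gaps by (rule gaps_tendsto_imp_tendsto_at_top)
  have fin: "finite (range a \<inter> A n)" if "van_Hove A" for A n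
    using that tendsto_at_top_imp_locally_finite_range[OF a_lim]
    unfolding van_Hove_def locally_finite_set_def by (simp add: compact_imp_bounded Int_commute)
  have card_lim: "filterlim (\<lambda>n. card (A n \<inter> range a)) at_top sequentially"
    if "van_Hove A" "\<forall>n. A n \<subseteq> A (Suc n)" "(\<Union>n. A n) = UNIV" for A
    using that fin[OF that(1)] tendsto_at_top_imp_infinite_range[OF a_lim]
    by (intro exhausting_imp_card_Int_tendsto_at_top) (auto simp: Int_commute)
  have autocorrelation: "is_counting_autocorrelation (range a) A (return borel 0)"
    if "van_Hove A" "filterlim (\<lambda>n. card (A n \<inter> range a)) at_top sequentially" for A
    using close fin[OF that(1)] that(2) by (rule finite_close_pairs_imp_counting_autocorrelation_dirac)
  show ?thesis
    using finite_close_pairs_imp_FLC[OF close] card_lim autocorrelation fourier_transform_dirac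
    by simp
qed

end
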